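(* For an integer $n\ge2$ let $\Pi^{\mathrm{rot}}_i=\frac1n(\mathbb{I}+\hat n_i\cdot\vec\sigma)$, $i=1,\dots,n$, with $\hat n_i=(\cos\frac{2\pi i}{n},0,\sin\frac{2\pi i}{n})$. Then $$R^p(\{\Pi^{\mathrm{rot}}_i\})=\begin{cases}\frac1n\cot\left(\frac{\pi}{2n}\right)\cos\left(\frac{\pi}{2n}\right)&n\text{ odd},\\ \frac2n\cot\left(\frac{\pi}{n}\right)&n\text{ even}.\end{cases}$$
   Context: A qubit POVM $\{\Pi_i\}$ simulates a family $\{M_{a|x}\}$ if $M_{a|x}=\sum_i p(a|x,i)\Pi_i$ with $p(a|x,i)\ge0$, $\sum_a p(a|x,i)=1$. $\mathcal{P}^p_r$ is the family of two-outcome POVMs $\{\tfrac12(\mathbb{I}\pm r\hat n\cdot\vec\sigma)\}$ over all unit vectors $\hat n=(n_x,0,n_z)$. For a POVM $\{\Pi_i\}$, $R^p(\{\Pi_i\})$ is the largest $r$ such that $\{\Pi_i\}$ simulates $\mathcal{P}^p_r$. *)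

theory Defs
  imports "HOL-Analysis.Analysis"
begin

type_synonym qop = "complex^2^2"

definition mat2 :: "complex \<Rightarrow> complex \<Rightarrow> complex \<Rightarrow> complex \<Rightarrow> qop" where
  "mat2 a b c d = (\<chi> i j. if i = 1 then (if j = 1 then a else b) else (if j = 1 then c else d))"

definition Id2 :: qop where "Id2 = mat2 1 0 0 1"
definition sigma_x :: qop where "sigma_x = mat2 0 1 1 0"
definition sigma_y :: qop where "sigma_y = mat2 0 (-\<i>) \<i> 0"
definition sigma_z :: qop where "sigma_z = mat2 1 0 0 (-1)"

definition dot_sigma :: "real \<times> real \<times> real \<Rightarrow> qop" where
  "dot_sigma v = (case v of (nx, ny, nz) \<Rightarrow> nx *\<^sub>R sigma_x + ny *\<^sub>R sigma_y + nz *\<^sub>R sigma_z)"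

definition simulates :: "'i set \<Rightarrow> ('i \<Rightarrow> qop) \<Rightarrow> 'x set \<Rightarrow> 'a set \<Rightarrow> ('a \<Rightarrow> 'x \<Rightarrow> qop) \<Rightarrow> bool" where
  "simulates I Povm X A M \<longleftrightarrow>
     (\<exists>p :: 'a \<Rightarrow> 'x \<Rightarrow> 'i \<Rightarrow> real.
        (\<forall>x\<in>X. \<forall>a\<in>A. \<forall>i\<in>I. p a x i \<ge> 0) \<and>
        (\<forall>x\<in>X. \<forall>i\<in>I. (\<Sum>a\<in>A. p a x i) = 1) \<and>
        (\<forall>x\<in>X. \<forall>a\<in>A. M a x = (\<Sum>i\<in>I. p a x i *\<^sub>R Povm i)))"

text \<open>The family P^p_r: x ranges over unit vectors (nx, 0, nz), given by the pair (nx, nz);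
  outcome a = True is "+", a = False is "-".\<close>
definition unit_xz :: "(real \<times> real) set" where
  "unit_xz = {(nx, nz). nx\<^sup>2 + nz\<^sup>2 = 1}"

definition Pp :: "real \<Rightarrow> bool \<Rightarrow> real \<times> real \<Rightarrow> qop" where
  "Pp r a x = (case x of (nx, nz) \<Rightarrow>
      (1/2) *\<^sub>R (Id2 + (if a then r else - r) *\<^sub>R dot_sigma (nx, 0, nz)))"

definition Rp :: "'i set \<Rightarrow> ('i \<Rightarrow> qop) \<Rightarrow> real" where
  "Rp I Povm = Sup {r. simulates I Povm unit_xz UNIV (Pp r)}"

definition Pi_rot :: "nat \<Rightarrow> nat \<Rightarrow> qop" where
  "Pi_rot n i = (1 / real n) *\<^sub>R (Id2 + dot_sigma (cos (2*pi*real i/real n), 0, sin (2*pi*real i/real n)))"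

end

theory Submission
  imports Defs
begin

text \<open>
  Identify the $x$--$z$ plane with \<open>\<complex>\<close> via $(n_x,n_z) \mapsto n_x + i n_z$ and put
  $s_i = 2\,p(+|x,i) - 1$. Then $\{\Pi^{rot}_i\}$ simulates $\mathcal{P}^p_r$ iff $n r u$ lies, for every
  unit $u$, in the zonotope $W = \{\sum_i s_i e^{i\theta_i} : |s_i| \le 1, \sum_i s_i = 0\}$, so
  $n R^p$ is the inradius of $W$. The set $W$ is convex, centrally symmetric and invariant under rotation
  by $2\pi/n$ (hence, for odd $n$, by $\pi/n$); so it contains the regular polygon spanned by the rotated
  copies of the vertex with weights $\pm 1$ on the two halves of the angles, and with it the inscribed
  circle of that polygon. Conversely, along the apothem of that polygon a linear functional is maximised
  on the weight cube by the same sign pattern, which gives the matching upper bound.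
\<close>

lemma sin_half_mult_sum_sin:
  fixes a x :: real
  shows "2 * sin (x/2) * (\<Sum>i=1..K. sin (a + real i * x)) = cos (a + x/2) - cos (a + (real K + 1/2) * x)"
proof (induction K)
  case (Suc K)
  have "2 * sin (x/2) * sin (a + real (Suc K) * x)
      = cos (x/2 - (a + real (Suc K) * x)) - cos (x/2 + (a + real (Suc K) * x))"
    using sin_times_sin[of "x/2" "a + real (Suc K) * x"] by simp
  also have "\<dots> = cos (a + (real K + 1/2) * x) - cos (a + (real (Suc K) + 1/2) * x)"
    by (subst cos_minus[symmetric]) (simp add: algebra_simps)
  finally show ?case using Suc by (simp add: distrib_left)
qed simp

lemma sin_half_mult_sum_cos:
  fixes a x :: real
  shows "2 * sin (x/2) * (\<Sum>i=1..K. cos (a + real i * x)) = sin (a + (real K + 1/2) * x) - sin (a + x/2)"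
proof (induction K)
  case (Suc K)
  have "2 * sin (x/2) * cos (a + real (Suc K) * x)
      = sin (x/2 + (a + real (Suc K) * x)) + sin (x/2 - (a + real (Suc K) * x))"
    using sin_times_cos[of "x/2" "a + real (Suc K) * x"] by simp
  also have "sin (x/2 - (a + real (Suc K) * x)) = - sin (a + (real K + 1/2) * x)"
    by (subst sin_minus[symmetric]) (simp add: algebra_simps)
  also have "x/2 + (a + real (Suc K) * x) = a + (real (Suc K) + 1/2) * x"
    by (simp add: algebra_simps)
  finally show ?case using Suc by (simp add: distrib_left)
qed simp

lemma cot_eq_one_plus_cos_div_sin: "cot x = (1 + cos (2 * x)) / sin (2 * x)"
  by (simp add: cot_altdef tan_half add.commute)

lemma sum_cis_mult_eq_pi:
  assumes "sin z \<noteq> 0" and "real K * (2 * z) = pi"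
  shows "(\<Sum>i=1..K. cis (real i * (2 * z))) = Complex (-1) (cot z)"
proof -
  have c: "2 * sin z \<noteq> 0"
    using assms(1) by simp
  have K: "(real K + 1/2) * (2 * z) = pi + z"
    using assms(2) by (simp add: algebra_simps)
  have "(\<Sum>i=1..K. cos (real i * (2 * z))) = -1"
    by (rule mult_left_cancel[OF c, THEN iffD1]) (use sin_half_mult_sum_cos[of "2 * z" 0 K] K in simp)
  moreover have "(\<Sum>i=1..K. sin (real i * (2 * z))) = cot z"
    by (rule mult_left_cancel[OF c, THEN iffD1])
      (use sin_half_mult_sum_sin[of "2 * z" 0 K] K assms(1) in \<open>simp add: cot_def\<close>)
  ultimately show ?thesis
    by (simp add: complex_eq_iff)
qed

lemma sum_cis_mult_eq_pi_minus_half: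
  assumes "sin (2 * z) \<noteq> 0" and "(real K + 1/2) * (4 * z) = pi"
  shows "(\<Sum>i=1..K. cis (real i * (4 * z))) = Complex (-1/2) (cot z / 2)"
proof -
  have c: "2 * sin (2 * z) \<noteq> 0"
    using assms(1) by simp
  have "(\<Sum>i=1..K. cos (real i * (4 * z))) = -1/2"
    by (rule mult_left_cancel[OF c, THEN iffD1]) (use sin_half_mult_sum_cos[of "4 * z" 0 K] assms in simp)
  moreover have "(\<Sum>i=1..K. sin (real i * (4 * z))) = cot z / 2"
    by (rule mult_left_cancel[OF c, THEN iffD1])
      (use sin_half_mult_sum_sin[of "4 * z" 0 K] assms cot_eq_one_plus_cos_div_sin[of z]
        in \<open>simp add: field_simps\<close>)
  ultimately show ?thesis
    by (simp add: complex_eq_iff)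
qed

lemma sin_pi_div_gt_zero: "n \<ge> 2 \<Longrightarrow> sin (pi / real n) > 0"
  by (intro sin_gt_zero) (auto simp: field_simps)

lemma sin_le_sin_of_le_pi_minus:
  assumes "0 \<le> y" and "y \<le> b" and "b \<le> pi - y"
  shows "sin y \<le> sin b"
proof (cases "b \<le> pi/2")
  case True
  then show ?thesis using assms by (intro sin_monotone_2pi_le) auto
next
  case False
  then have "sin y \<le> sin (pi - b)" using assms by (intro sin_monotone_2pi_le) auto
  then show ?thesis by simp
qed

lemma sum_cyclic_shift:
  fixes f :: "nat \<Rightarrow> 'a::real_vector"
  assumes "n \<ge> 1" and "f (n + 1) = f 1"
  shows "(\<Sum>i=1..n. (if i = 1 then s n else s (i - 1)) *\<^sub>R f i) = (\<Sum>i=1..n. s i *\<^sub>R f (i + 1))"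
proof -
  obtain k where k: "n = Suc k" using assms(1) by (cases n) auto
  define g where "g i = (if i = 1 then s n else s (i - 1)) *\<^sub>R f i" for i
  have "(\<Sum>i=1..Suc k. g i) = g 1 + (\<Sum>i=Suc 1..Suc k. g i)"
    by (rule sum.atLeast_Suc_atMost) simp
  also have "(\<Sum>i=Suc 1..Suc k. g i) = (\<Sum>i=1..k. g (Suc i))"
    by (rule sum.shift_bounds_cl_Suc_ivl)
  also have "\<dots> = (\<Sum>i=1..k. s i *\<^sub>R f (i + 1))"
    by (rule sum.cong) (auto simp: g_def)
  also have "g 1 = s n *\<^sub>R f (n + 1)"
    unfolding g_def using assms(2) by simp
  finally have "(\<Sum>i=1..n. g i) = (\<Sum>i=1..k. s i *\<^sub>R f (i + 1)) + s n *\<^sub>R f (n + 1)"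
    unfolding k by simp
  also have "\<dots> = (\<Sum>i=1..n. s i *\<^sub>R f (i + 1))"
    unfolding k by simp
  finally show ?thesis
    unfolding g_def .
qed

lemma sum_mult_le_sum_sign_mult:
  fixes s \<sigma> c :: "'i \<Rightarrow> real"
  assumes s: "\<forall>i\<in>I. \<bar>s i\<bar> \<le> 1" "sum s I = 0"
    and \<sigma>: "\<forall>i\<in>I. \<sigma> i * (c i - t) = \<bar>c i - t\<bar>" "sum \<sigma> I = 0"
  shows "(\<Sum>i\<in>I. s i * c i) \<le> (\<Sum>i\<in>I. \<sigma> i * c i)"
proof -
  have "(\<Sum>i\<in>I. s i * c i) = (\<Sum>i\<in>I. s i * (c i - t))"
    using s(2) by (simp add: right_diff_distrib sum_subtractf sum_distrib_right[symmetric])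
  also have "\<dots> \<le> (\<Sum>i\<in>I. \<bar>c i - t\<bar>)"
  proof (rule sum_mono)
    fix i assume "i \<in> I"
    have "s i * (c i - t) \<le> \<bar>s i\<bar> * \<bar>c i - t\<bar>"
      by (metis abs_ge_self abs_mult)
    also have "\<dots> \<le> \<bar>c i - t\<bar>"
      using s(1) \<open>i \<in> I\<close> by (simp add: mult_left_le_one_le)
    finally show "s i * (c i - t) \<le> \<bar>c i - t\<bar>" .
  qed
  also have "\<dots> = (\<Sum>i\<in>I. \<sigma> i * (c i - t))"
    using \<sigma>(1) by simp
  also have "\<dots> = (\<Sum>i\<in>I. \<sigma> i * c i)"
    using \<sigma>(2) by (simp add: right_diff_distrib sum_subtractf sum_distrib_right[symmetric])
  finally show ?thesis .
qed

lemma exists_multiple_near_angle: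
  fixes \<psi> \<phi> \<alpha> :: real
  assumes "0 < \<alpha>" "\<alpha> \<le> pi" and N: "real N * \<alpha> = 2 * pi" "N > 0"
  shows "\<exists>k<N. cos (\<psi> + real k * \<alpha> - \<phi>) \<ge> cos (\<alpha>/2)"
proof -
  define j where "j = \<lfloor>(\<phi> - \<psi>) / \<alpha> + 1/2\<rfloor>"
  define d where "d = \<psi> + real_of_int j * \<alpha> - \<phi>"
  have "\<bar>real_of_int j - (\<phi> - \<psi>) / \<alpha>\<bar> \<le> 1/2"
    unfolding j_def by linarith
  then have "\<alpha> * \<bar>real_of_int j - (\<phi> - \<psi>) / \<alpha>\<bar> \<le> \<alpha> * (1/2)"
    using assms by (intro mult_left_mono) auto
  moreover have "d = \<alpha> * (real_of_int j - (\<phi> - \<psi>) / \<alpha>)"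
    unfolding d_def using assms by (simp add: field_simps)
  ultimately have d: "\<bar>d\<bar> \<le> \<alpha> / 2"
    using assms by (simp add: abs_mult)
  define k where "k = nat (j mod int N)"
  have "k < N"
    unfolding k_def using N by (simp add: nat_less_iff)
  have "real k = real_of_int (j mod int N)"
    unfolding k_def using N by simp
  also have "j mod int N = j - int N * (j div int N)"
    by (simp add: minus_div_mult_eq_mod[symmetric] algebra_simps)
  finally have "real k = real_of_int j - real N * real_of_int (j div int N)"
    by simp
  then have "real k * \<alpha> = (real_of_int j - real N * real_of_int (j div int N)) * \<alpha>"
    by simp
  then have "real k * \<alpha> = real_of_int j * \<alpha> - (real N * \<alpha>) * real_of_int (j div int N)"
    by (simp add: algebra_simps)
  then have "\<psi> + real k * \<alpha> - \<phi> = d - 2 * pi * real_of_int (j div int N)"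
    unfolding d_def N(1) by simp
  then have "cos (\<psi> + real k * \<alpha> - \<phi>) = cos \<bar>d\<bar>"
    by (simp add: cos_diff)
  also have "\<dots> \<ge> cos (\<alpha>/2)"
    using d assms by (subst cos_mono_le_eq) auto
  finally show ?thesis
    using \<open>k < N\<close> by blast
qed

lemma inner_rcis: "inner a (rcis r \<theta>) = r * cmod a * cos (\<theta> - Arg a)"
proof -
  have "Re a = cmod a * cos (Arg a)" "Im a = cmod a * sin (Arg a)"
    by (metis Re_rcis Im_rcis rcis_cmod_Arg)+
  then show ?thesis
    by (simp add: inner_complex_def cos_diff algebra_simps)
qed

lemma rotation_invariant_convex_contains_circle:
  fixes W :: "complex set"
  assumes "convex W" and rot: "\<And>x. x \<in> W \<Longrightarrow> cis \<alpha> * x \<in> W"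
    and "rcis \<rho> \<psi> \<in> W" and "0 \<le> \<rho>"
    and \<alpha>: "0 < \<alpha>" "\<alpha> \<le> pi" and N: "real N * \<alpha> = 2 * pi" "N > 0"
    and u: "cmod u = 1"
  shows "(\<rho> * cos (\<alpha>/2)) *\<^sub>R u \<in> W"
proof (rule ccontr)
  define w where "w = (\<rho> * cos (\<alpha>/2)) *\<^sub>R u"
  define V where "V k = rcis \<rho> (\<psi> + real k * \<alpha>)" for k :: nat
  assume "w \<notin> W"
  have V_in: "V k \<in> W" for k
  proof (induction k)
    case (Suc k)
    have "V (Suc k) = cis \<alpha> * V k"
      by (simp add: V_def rcis_def cis_mult algebra_simps)
    then show ?case
      using rot Suc by simp
  qed (use assms(3) in \<open>simp add: V_def\<close>)
  define C where "C = convex hull (V ` {..<N})"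
  have "C \<subseteq> W"
    unfolding C_def using V_in assms(1) by (intro hull_minimal) auto
  then have "w \<notin> C"
    using \<open>w \<notin> W\<close> by auto
  moreover have "convex C" "closed C"
    unfolding C_def by (auto intro: compact_imp_closed finite_imp_compact_convex_hull)
  ultimately obtain a b where ab: "inner a w < b" and aC: "\<forall>x\<in>C. b < inner a x"
    using separating_hyperplane_closed_point[of C w] by blast
  obtain k where "k < N" and k: "cos (\<psi> + real k * \<alpha> - (Arg a + pi)) \<ge> cos (\<alpha>/2)"
    using exists_multiple_near_angle[OF \<alpha> N] by blast
  then have "b < inner a (V k)"
    using aC unfolding C_def by (auto intro: hull_inc)
  also have "inner a (V k) = - (\<rho> * cmod a * cos (\<psi> + real k * \<alpha> - (Arg a + pi)))"
    by (simp add: V_def inner_rcis algebra_simps cos_diff)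
  also have "\<dots> \<le> - (\<rho> * cmod a * cos (\<alpha>/2))"
    using k \<open>0 \<le> \<rho>\<close> by (simp add: mult_left_mono)
  also have "\<dots> \<le> inner a w"
  proof -
    have "cos (\<alpha>/2) \<ge> 0"
      using \<alpha> by (intro cos_ge_zero) auto
    then have "cmod w = \<rho> * cos (\<alpha>/2)"
      using u \<open>0 \<le> \<rho>\<close> by (simp add: w_def)
    then show ?thesis
      using norm_cauchy_schwarz[of "-a" w] by (simp add: algebra_simps)
  qed
  finally show False
    using ab by simp
qed

abbreviation rot_angle :: "nat \<Rightarrow> nat \<Rightarrow> real" where
  "rot_angle n i \<equiv> 2 * pi * real i / real n"

lemma sum_sin_rot_angle:
  assumes "n \<ge> 2"
  shows "(\<Sum>i=1..n. sin (rot_angle n i)) = 0"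
proof -
  have "(real n + 1/2) * (2 * pi / real n) = pi / real n + 2 * pi"
    using assms by (simp add: field_simps)
  moreover have "(\<Sum>i=1..n. sin (0 + real i * (2 * pi / real n))) = (\<Sum>i=1..n. sin (rot_angle n i))"
    by (simp add: mult.commute)
  ultimately show ?thesis
    using sin_half_mult_sum_sin[of "2 * pi / real n" 0 n] sin_pi_div_gt_zero[OF assms] by simp
qed

lemma sum_cos_rot_angle:
  assumes "n \<ge> 2"
  shows "(\<Sum>i=1..n. cos (rot_angle n i)) = 0"
proof -
  have "(real n + 1/2) * (2 * pi / real n) = pi / real n + 2 * pi"
    using assms by (simp add: field_simps)
  moreover have "(\<Sum>i=1..n. cos (0 + real i * (2 * pi / real n))) = (\<Sum>i=1..n. cos (rot_angle n i))"
    by (simp add: mult.commute)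
  ultimately show ?thesis
    using sin_half_mult_sum_cos[of "2 * pi / real n" 0 n] sin_pi_div_gt_zero[OF assms] by simp
qed

lemma sum_cis_rot_angle: "n \<ge> 2 \<Longrightarrow> (\<Sum>i=1..n. cis (rot_angle n i)) = 0"
  using sum_sin_rot_angle[of n] sum_cos_rot_angle[of n] by (simp add: complex_eq_iff)

lemma mat2_eq_iff: "mat2 a b c d = mat2 a' b' c' d' \<longleftrightarrow> a = a' \<and> b = b' \<and> c = c' \<and> d = d'"
  by (auto simp: mat2_def vec_eq_iff forall_2)

lemma sum_scaleR_mat2:
  "(\<Sum>i\<in>I. q i *\<^sub>R mat2 (a i) (b i) (c i) (d i)) =
     mat2 (\<Sum>i\<in>I. q i *\<^sub>R a i) (\<Sum>i\<in>I. q i *\<^sub>R b i)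
       (\<Sum>i\<in>I. q i *\<^sub>R c i) (\<Sum>i\<in>I. q i *\<^sub>R d i)"
  by (auto simp: mat2_def vec_eq_iff forall_2)

lemma scaleR_Id2_plus_dot_sigma:
  "t *\<^sub>R (Id2 + u *\<^sub>R dot_sigma (nx, 0, nz)) =
     mat2 (of_real (t * (1 + u * nz))) (of_real (t * u * nx))
       (of_real (t * u * nx)) (of_real (t * (1 - u * nz)))"
  unfolding dot_sigma_def Id2_def sigma_x_def sigma_y_def sigma_z_def
  by (simp add: mat2_def vec_eq_iff forall_2) (simp add: scaleR_conv_of_real algebra_simps)

lemma Pp_sign: "Pp r a x = Pp ((if a then 1 else -1) * r) True x"
  by (simp add: Pp_def split: prod.split)

lemma Pp_eq_sum_Pi_rot_iff:
  assumes "n > 0"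
  shows "Pp r True (nx, nz) = (\<Sum>i\<in>I. q i *\<^sub>R Pi_rot n i) \<longleftrightarrow>
    (\<Sum>i\<in>I. q i) = real n / 2 \<and> (\<Sum>i\<in>I. q i *\<^sub>R cis (rot_angle n i)) = (real n * r / 2) *\<^sub>R Complex nx nz"
proof -
  define Q C S where "Q = (\<Sum>i\<in>I. q i)" and "C = (\<Sum>i\<in>I. q i * cos (rot_angle n i))"
    and "S = (\<Sum>i\<in>I. q i * sin (rot_angle n i))"
  have "Pp r True (nx, nz) = (1/2) *\<^sub>R (Id2 + r *\<^sub>R dot_sigma (nx, 0, nz))"
    by (simp add: Pp_def)
  also have "\<dots> = mat2 (of_real ((1 + r * nz) / 2)) (of_real (r * nx / 2))
      (of_real (r * nx / 2)) (of_real ((1 - r * nz) / 2))"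
    unfolding scaleR_Id2_plus_dot_sigma by simp
  finally have P: "Pp r True (nx, nz) = \<dots>" .
  have "(\<Sum>i\<in>I. q i *\<^sub>R Pi_rot n i) =
      (\<Sum>i\<in>I. q i *\<^sub>R ((1 / real n) *\<^sub>R (Id2 + 1 *\<^sub>R dot_sigma (cos (rot_angle n i), 0, sin (rot_angle n i)))))"
    by (simp add: Pi_rot_def)
  also have "\<dots> = mat2 (of_real ((Q + S) / n)) (of_real (C / n)) (of_real (C / n)) (of_real ((Q - S) / n))"
    unfolding scaleR_Id2_plus_dot_sigma sum_scaleR_mat2 Q_def C_def S_def
    by (simp add: scaleR_conv_of_real sum_divide_distrib[symmetric] sum.distrib sum_subtractf
        algebra_simps add_divide_distrib diff_divide_distrib)
  finally have R: "(\<Sum>i\<in>I. q i *\<^sub>R Pi_rot n i) = \<dots>" .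
  have "(\<Sum>i\<in>I. q i *\<^sub>R cis (rot_angle n i)) = Complex C S"
    by (simp add: complex_eq_iff C_def S_def)
  then show ?thesis
    unfolding P R mat2_eq_iff of_real_eq_iff Q_def[symmetric] using assms
    by (auto simp: complex_eq_iff field_simps)
qed

lemma unit_xz_iff_cmod: "(nx, nz) \<in> unit_xz \<longleftrightarrow> cmod (Complex nx nz) = 1"
  by (simp add: unit_xz_def cmod_def)

definition rot_zonotope :: "nat \<Rightarrow> complex set" where
  "rot_zonotope n = {(\<Sum>i=1..n. s i *\<^sub>R cis (rot_angle n i)) | s.
     (\<forall>i\<in>{1..n}. \<bar>s i\<bar> \<le> 1) \<and> (\<Sum>i=1..n. s i) = 0}"

lemma mem_rot_zonotope:
  "w \<in> rot_zonotope n \<longleftrightarrow> (\<exists>s. (\<forall>i\<in>{1..n}. \<bar>s i\<bar> \<le> 1) \<and> (\<Sum>i=1..n. s i) = 0 \<and>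
     w = (\<Sum>i=1..n. s i *\<^sub>R cis (rot_angle n i)))"
  by (auto simp: rot_zonotope_def)

lemma Pp_eq_sum_Pi_rot_iff_signs:
  assumes n: "n \<ge> 2"
  shows "Pp r True (nx, nz) = (\<Sum>i=1..n. ((1 + s i) / 2) *\<^sub>R Pi_rot n i) \<longleftrightarrow>
    (\<Sum>i=1..n. s i) = 0 \<and> (\<Sum>i=1..n. s i *\<^sub>R cis (rot_angle n i)) = (real n * r) *\<^sub>R Complex nx nz"
proof -
  have sum_eq: "(\<Sum>i=1..n. (1 + s i) / 2) = real n / 2 + (\<Sum>i=1..n. s i) / 2"
    by (simp add: sum.distrib add_divide_distrib sum_divide_distrib[symmetric])
  have "(\<Sum>i=1..n. ((1 + s i) / 2) *\<^sub>R cis (rot_angle n i))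
      = (1/2) *\<^sub>R (\<Sum>i=1..n. cis (rot_angle n i)) + (1/2) *\<^sub>R (\<Sum>i=1..n. s i *\<^sub>R cis (rot_angle n i))"
    by (simp add: add_divide_distrib scaleR_add_left sum.distrib scaleR_sum_right)
  then have cis_eq: "(\<Sum>i=1..n. ((1 + s i) / 2) *\<^sub>R cis (rot_angle n i))
      = (1/2) *\<^sub>R (\<Sum>i=1..n. s i *\<^sub>R cis (rot_angle n i))"
    using sum_cis_rot_angle[OF n] by simp
  have half: "(real n * r / 2) *\<^sub>R Complex nx nz = (1/2) *\<^sub>R ((real n * r) *\<^sub>R Complex nx nz)"
    by simp
  have "n > 0"
    using n by simp
  then show ?thesis
    unfolding Pp_eq_sum_Pi_rot_iff[OF \<open>n > 0\<close>] sum_eq cis_eq half scaleR_cancel_left by auto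
qed

lemma simulates_Pi_rot_iff:
  assumes n: "n \<ge> 2"
  shows "simulates {1..n} (Pi_rot n) unit_xz UNIV (Pp r) \<longleftrightarrow>
    (\<forall>u. cmod u = 1 \<longrightarrow> (real n * r) *\<^sub>R u \<in> rot_zonotope n)"
proof
  assume "simulates {1..n} (Pi_rot n) unit_xz UNIV (Pp r)"
  then obtain p :: "bool \<Rightarrow> real \<times> real \<Rightarrow> nat \<Rightarrow> real" where
    p_nonneg: "\<forall>x\<in>unit_xz. \<forall>a. \<forall>i\<in>{1..n}. p a x i \<ge> 0" and
    p_sum: "\<forall>x\<in>unit_xz. \<forall>i\<in>{1..n}. (\<Sum>a\<in>UNIV. p a x i) = 1" and
    p_eq: "\<forall>x\<in>unit_xz. \<forall>a. Pp r a x = (\<Sum>i=1..n. p a x i *\<^sub>R Pi_rot n i)"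
    unfolding simulates_def by blast
  show "\<forall>u. cmod u = 1 \<longrightarrow> (real n * r) *\<^sub>R u \<in> rot_zonotope n"
  proof (intro allI impI)
    fix u :: complex assume "cmod u = 1"
    then have x: "(Re u, Im u) \<in> unit_xz"
      by (simp add: unit_xz_iff_cmod)
    define s where "s i = 2 * p True (Re u, Im u) i - 1" for i
    have "\<bar>s i\<bar> \<le> 1" if i: "i \<in> {1..n}" for i
    proof -
      have "p False (Re u, Im u) i + p True (Re u, Im u) i = 1"
        using p_sum x i by (simp add: UNIV_bool)
      moreover have "p False (Re u, Im u) i \<ge> 0" "p True (Re u, Im u) i \<ge> 0"
        using p_nonneg x i by auto
      ultimately show ?thesis by (simp add: s_def)
    qed
    moreover have "Pp r True (Re u, Im u) = (\<Sum>i=1..n. ((1 + s i) / 2) *\<^sub>R Pi_rot n i)"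
      using p_eq x by (simp add: s_def)
    then have "(\<Sum>i=1..n. s i) = 0" "(real n * r) *\<^sub>R u = (\<Sum>i=1..n. s i *\<^sub>R cis (rot_angle n i))"
      unfolding Pp_eq_sum_Pi_rot_iff_signs[OF n] by simp_all
    ultimately show "(real n * r) *\<^sub>R u \<in> rot_zonotope n"
      unfolding mem_rot_zonotope by blast
  qed
next
  assume W: "\<forall>u. cmod u = 1 \<longrightarrow> (real n * r) *\<^sub>R u \<in> rot_zonotope n"
  have "\<forall>x\<in>unit_xz. \<exists>s. (\<forall>i\<in>{1..n}. \<bar>s i\<bar> \<le> 1) \<and> (\<Sum>i=1..n. s i) = 0 \<and>
      (\<Sum>i=1..n. s i *\<^sub>R cis (rot_angle n i)) = (real n * r) *\<^sub>R Complex (fst x) (snd x)"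
  proof
    fix x :: "real \<times> real" assume "x \<in> unit_xz"
    then have "(real n * r) *\<^sub>R Complex (fst x) (snd x) \<in> rot_zonotope n"
      using W by (cases x) (simp add: unit_xz_iff_cmod)
    then show "\<exists>s. (\<forall>i\<in>{1..n}. \<bar>s i\<bar> \<le> 1) \<and> (\<Sum>i=1..n. s i) = 0 \<and>
      (\<Sum>i=1..n. s i *\<^sub>R cis (rot_angle n i)) = (real n * r) *\<^sub>R Complex (fst x) (snd x)"
      unfolding mem_rot_zonotope by auto
  qed
  from bchoice[OF this] obtain S where
    S: "\<forall>x\<in>unit_xz. (\<forall>i\<in>{1..n}. \<bar>S x i\<bar> \<le> 1) \<and> (\<Sum>i=1..n. S x i) = 0 \<and>
      (\<Sum>i=1..n. S x i *\<^sub>R cis (rot_angle n i)) = (real n * r) *\<^sub>R Complex (fst x) (snd x)"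
    by blast
  define p where "p a x i = (1 + (if a then 1 else -1) * S x i) / 2" for a x i
  show "simulates {1..n} (Pi_rot n) unit_xz UNIV (Pp r)"
    unfolding simulates_def
  proof (intro exI[of _ p] conjI ballI allI)
    fix x a i assume "x \<in> unit_xz" "i \<in> {1..n}"
    then have "\<bar>S x i\<bar> \<le> 1"
      using S by blast
    then show "p a x i \<ge> 0"
      by (auto simp: p_def abs_le_iff)
  next
    fix x i show "(\<Sum>a\<in>UNIV. p a x i) = 1"
      by (simp add: p_def UNIV_bool add_divide_distrib[symmetric])
  next
    fix x a assume x: "x \<in> unit_xz"
    obtain nx nz where xx: "x = (nx, nz)" by fastforce
    define c :: real where "c = (if a then 1 else -1)"
    have S_x: "(\<Sum>i=1..n. S x i) = 0"
      "(\<Sum>i=1..n. S x i *\<^sub>R cis (rot_angle n i)) = (real n * r) *\<^sub>R Complex nx nz"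
      using S x unfolding xx by auto
    have "(\<Sum>i=1..n. (c * S x i) *\<^sub>R cis (rot_angle n i)) = c *\<^sub>R (\<Sum>i=1..n. S x i *\<^sub>R cis (rot_angle n i))"
      by (simp add: scaleR_sum_right)
    then have "(\<Sum>i=1..n. c * S x i) = 0"
      and "(\<Sum>i=1..n. (c * S x i) *\<^sub>R cis (rot_angle n i)) = (real n * (c * r)) *\<^sub>R Complex nx nz"
      using S_x by (simp_all add: sum_distrib_left[symmetric] mult.left_commute)
    then show "Pp r a x = (\<Sum>i=1..n. p a x i *\<^sub>R Pi_rot n i)"
      unfolding xx Pp_sign[of r a] c_def[symmetric] p_def Pp_eq_sum_Pi_rot_iff_signs[OF n] by simp
  qed
qed

lemma convex_rot_zonotope: "convex (rot_zonotope n)"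
proof (rule convexI)
  fix x y :: complex and u v :: real
  assume "x \<in> rot_zonotope n" "y \<in> rot_zonotope n" and uv: "0 \<le> u" "0 \<le> v" "u + v = 1"
  then obtain s1 s2 where
    s1: "\<forall>i\<in>{1..n}. \<bar>s1 i\<bar> \<le> 1" "(\<Sum>i=1..n. s1 i) = 0" "x = (\<Sum>i=1..n. s1 i *\<^sub>R cis (rot_angle n i))" and
    s2: "\<forall>i\<in>{1..n}. \<bar>s2 i\<bar> \<le> 1" "(\<Sum>i=1..n. s2 i) = 0" "y = (\<Sum>i=1..n. s2 i *\<^sub>R cis (rot_angle n i))"
    unfolding mem_rot_zonotope by blast
  define s where "s i = u * s1 i + v * s2 i" for i
  have "\<bar>s i\<bar> \<le> 1" if "i \<in> {1..n}" for i
  proof -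
    have "\<bar>s i\<bar> \<le> u * \<bar>s1 i\<bar> + v * \<bar>s2 i\<bar>"
      unfolding s_def using uv by (metis abs_mult abs_of_nonneg abs_triangle_ineq)
    also have "\<dots> \<le> u + v"
      using s1(1) s2(1) that uv by (intro add_mono mult_left_le) auto
    finally show ?thesis using uv by simp
  qed
  moreover have "(\<Sum>i=1..n. s i) = 0"
    using s1(2) s2(2) by (simp add: s_def sum.distrib sum_distrib_left[symmetric])
  moreover have "u *\<^sub>R x + v *\<^sub>R y = (\<Sum>i=1..n. s i *\<^sub>R cis (rot_angle n i))"
    using s1(3) s2(3) by (simp add: s_def scaleR_add_left sum.distrib scaleR_sum_right)
  ultimately show "u *\<^sub>R x + v *\<^sub>R y \<in> rot_zonotope n"
    unfolding mem_rot_zonotope by blast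
qed

lemma uminus_rot_zonotope:
  assumes "w \<in> rot_zonotope n" shows "- w \<in> rot_zonotope n"
proof -
  obtain s where "\<forall>i\<in>{1..n}. \<bar>s i\<bar> \<le> 1" "(\<Sum>i=1..n. s i) = 0"
    and "w = (\<Sum>i=1..n. s i *\<^sub>R cis (rot_angle n i))"
    using assms unfolding mem_rot_zonotope by blast
  then have "\<forall>i\<in>{1..n}. \<bar>- s i\<bar> \<le> 1" "(\<Sum>i=1..n. - s i) = 0"
    and "- w = (\<Sum>i=1..n. (- s i) *\<^sub>R cis (rot_angle n i))"
    by (simp_all add: sum_negf)
  then show ?thesis
    unfolding mem_rot_zonotope by (intro exI[of _ "\<lambda>i. - s i"]) simp
qed

lemma cis_rot_zonotope:
  assumes n: "n \<ge> 2" and w: "w \<in> rot_zonotope n"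
  shows "cis (2 * pi / real n) * w \<in> rot_zonotope n"
proof -
  obtain s where s: "\<forall>i\<in>{1..n}. \<bar>s i\<bar> \<le> 1" "(\<Sum>i=1..n. s i) = 0"
    and w_eq: "w = (\<Sum>i=1..n. s i *\<^sub>R cis (rot_angle n i))"
    using w unfolding mem_rot_zonotope by blast
  define s' where "s' i = (if i = 1 then s n else s (i - 1))" for i
  have rot: "cis (rot_angle n (i + 1)) = cis (2 * pi / real n) * cis (rot_angle n i)" for i
    using n by (simp add: cis_mult add_divide_distrib algebra_simps)
  have period: "cis (rot_angle n (n + 1)) = cis (rot_angle n 1)"
    using n rot[of n] by simp
  have "\<bar>s' i\<bar> \<le> 1" if i: "i \<in> {1..n}" for i
  proof (cases "i = 1")
    case False
    then have "i - 1 \<in> {1..n}" using i by auto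
    then show ?thesis using s(1) False by (simp add: s'_def)
  qed (use s(1) n in \<open>simp add: s'_def\<close>)
  moreover have "(\<Sum>i=1..n. s' i) = 0"
    using sum_cyclic_shift[of n "\<lambda>_. 1 :: real" s] n s(2) by (simp add: s'_def)
  moreover have "cis (2 * pi / real n) * w = (\<Sum>i=1..n. s' i *\<^sub>R cis (rot_angle n i))"
  proof -
    have "cis (2 * pi / real n) * w = (\<Sum>i=1..n. s i *\<^sub>R cis (rot_angle n (i + 1)))"
      unfolding w_eq rot by (simp add: sum_distrib_left)
    also have "\<dots> = (\<Sum>i=1..n. s' i *\<^sub>R cis (rot_angle n i))"
      unfolding s'_def using sum_cyclic_shift[OF _ period] n by simp
    finally show ?thesis .
  qed
  ultimately show ?thesis
    unfolding mem_rot_zonotope by blast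
qed

lemma cis_power_rot_zonotope:
  "n \<ge> 2 \<Longrightarrow> w \<in> rot_zonotope n \<Longrightarrow> cis (2 * pi / real n) ^ k * w \<in> rot_zonotope n"
  by (induction k) (simp_all add: cis_rot_zonotope mult.assoc)

lemma cis_half_rot_zonotope_odd:
  assumes n: "n = 2 * M + 1" "M \<ge> 1" and w: "w \<in> rot_zonotope n"
  shows "cis (pi / real n) * w \<in> rot_zonotope n"
proof -
  have "cis (2 * pi / real n) ^ (M + 1) = cis (real (M + 1) * (2 * pi / real n))"
    by (rule Complex.DeMoivre)
  also have "cis (real (M + 1) * (2 * pi / real n)) = cis (pi + pi / real n)"
    using n by (simp add: field_simps)
  also have "\<dots> = - cis (pi / real n)"
    by (simp add: complex_eq_iff cos_add sin_add)
  finally have eq: "cis (pi / real n) * w = - (cis (2 * pi / real n) ^ (M + 1) * w)"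
    by simp
  have "n \<ge> 2"
    using n by simp
  then show ?thesis
    unfolding eq by (intro uminus_rot_zonotope cis_power_rot_zonotope w)
qed

definition vertex_weight :: "nat \<Rightarrow> nat \<Rightarrow> real" where
  "vertex_weight n i = (if i \<le> n div 2 then 1 else if i \<le> 2 * (n div 2) then -1 else 0)"

lemma abs_vertex_weight_le: "\<bar>vertex_weight n i\<bar> \<le> 1"
  by (simp add: vertex_weight_def)

lemma sum_vertex_weight_scaleR:
  fixes f :: "nat \<Rightarrow> 'a::real_vector"
  shows "(\<Sum>i=1..n. vertex_weight n i *\<^sub>R f i) = 2 *\<^sub>R (\<Sum>i=1..n div 2. f i) - (\<Sum>i=1..2 * (n div 2). f i)"
proof -
  define m where "m = n div 2"
  define g where "g i = vertex_weight n i *\<^sub>R f i" for i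
  have "n = (m + m) + n mod 2"
    unfolding m_def by presburger
  then obtain p where n: "n = (m + m) + p" by blast
  have "(\<Sum>i=1..n. g i) = (\<Sum>i=1..m + m. g i) + (\<Sum>i=m + m + 1..n. g i)"
    using sum.ub_add_nat[of 1 "m + m" g p] n by simp
  also have "(\<Sum>i=m + m + 1..n. g i) = 0"
    by (rule sum.neutral) (auto simp: g_def vertex_weight_def m_def[symmetric])
  also have "(\<Sum>i=1..m + m. g i) = (\<Sum>i=1..m. g i) + (\<Sum>i=m + 1..m + m. g i)"
    by (rule sum.ub_add_nat) simp
  also have "(\<Sum>i=1..m. g i) = (\<Sum>i=1..m. f i)"
    by (rule sum.cong) (auto simp: g_def vertex_weight_def m_def[symmetric])
  also have "(\<Sum>i=m + 1..m + m. g i) = - (\<Sum>i=m + 1..m + m. f i)"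
    unfolding sum_negf[symmetric]
    by (rule sum.cong) (auto simp: g_def vertex_weight_def m_def[symmetric])
  finally have "(\<Sum>i=1..n. g i) = (\<Sum>i=1..m. f i) - (\<Sum>i=m + 1..m + m. f i)"
    by simp
  moreover have "(\<Sum>i=1..m + m. f i) = (\<Sum>i=1..m. f i) + (\<Sum>i=m + 1..m + m. f i)"
    by (rule sum.ub_add_nat) simp
  ultimately show ?thesis
    unfolding g_def m_def[symmetric] mult_2 by (simp add: scaleR_2)
qed

lemma sum_vertex_weight: "(\<Sum>i=1..n. vertex_weight n i) = 0"
proof -
  have "(\<Sum>i=1..n. vertex_weight n i) = (\<Sum>i=1..n. vertex_weight n i *\<^sub>R (1::real))"
    by simp
  also have "\<dots> = 2 *\<^sub>R (\<Sum>i=1..n div 2. 1) - (\<Sum>i=1..2 * (n div 2). 1)"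
    by (rule sum_vertex_weight_scaleR)
  also have "\<dots> = 0"
    by simp
  finally show ?thesis .
qed

definition rot_vertex :: "nat \<Rightarrow> complex" where
  "rot_vertex n = (\<Sum>i=1..n. vertex_weight n i *\<^sub>R cis (rot_angle n i))"

lemma rot_vertex_in_rot_zonotope: "rot_vertex n \<in> rot_zonotope n"
  unfolding mem_rot_zonotope rot_vertex_def
  using abs_vertex_weight_le sum_vertex_weight[of n] by (intro exI[of _ "vertex_weight n"]) simp

lemma rot_vertex_eq:
  "rot_vertex n = 2 *\<^sub>R (\<Sum>i=1..n div 2. cis (rot_angle n i)) - (\<Sum>i=1..2 * (n div 2). cis (rot_angle n i))"
  unfolding rot_vertex_def by (rule sum_vertex_weight_scaleR)

lemma rot_vertex_even:
  assumes "n = 2 * m" and "m \<ge> 1"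
  shows "rot_vertex n = Complex (-2) (2 * cot (pi / real n))"
proof -
  have "(\<Sum>i=1..m. cis (rot_angle n i)) = (\<Sum>i=1..m. cis (real i * (2 * (pi / real n))))"
    by (simp add: field_simps)
  also have "\<dots> = Complex (-1) (cot (pi / real n))"
    using assms sin_pi_div_gt_zero[of n] by (intro sum_cis_mult_eq_pi) auto
  finally show ?thesis
    using assms sum_cis_rot_angle[of n] unfolding rot_vertex_eq
    by (simp add: scaleR_2 complex_eq_iff)
qed

lemma rot_vertex_odd:
  assumes "n = 2 * M + 1" and "M \<ge> 1"
  shows "rot_vertex n = Complex 0 (cot (pi / (2 * real n)))"
proof -
  have "(\<Sum>i=1..M. cis (rot_angle n i)) = (\<Sum>i=1..M. cis (real i * (4 * (pi / (2 * real n)))))"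
    by (simp add: field_simps)
  also have "\<dots> = Complex (-1/2) (cot (pi / (2 * real n)) / 2)"
  proof (rule sum_cis_mult_eq_pi_minus_half)
    have "2 * (pi / (2 * real n)) = pi / real n" by simp
    then show "sin (2 * (pi / (2 * real n))) \<noteq> 0"
      using assms sin_pi_div_gt_zero[of n] by simp
    show "(real M + 1/2) * (4 * (pi / (2 * real n))) = pi"
      using assms by (simp add: field_simps)
  qed
  finally have first_half: "(\<Sum>i=1..M. cis (rot_angle n i)) = \<dots>" .
  have "(\<Sum>i=1..2 * M. cis (rot_angle n i)) = (\<Sum>i=1..n. cis (rot_angle n i)) - cis (rot_angle n n)"
    using assms(1) by simp
  also have "\<dots> = -1"
    using assms sum_cis_rot_angle[of n] by simp
  finally show ?thesis
    using assms first_half unfolding rot_vertex_eq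
    by (simp add: scaleR_2 complex_eq_iff)
qed

lemma inner_le_inner_rot_vertex:
  assumes sign: "\<forall>i\<in>{1..n}.
      vertex_weight n i * (inner u (cis (rot_angle n i)) - t) = \<bar>inner u (cis (rot_angle n i)) - t\<bar>"
    and w: "w \<in> rot_zonotope n"
  shows "inner u w \<le> inner u (rot_vertex n)"
proof -
  obtain s where s: "\<forall>i\<in>{1..n}. \<bar>s i\<bar> \<le> 1" "(\<Sum>i=1..n. s i) = 0"
    and w_eq: "w = (\<Sum>i=1..n. s i *\<^sub>R cis (rot_angle n i))"
    using w unfolding mem_rot_zonotope by blast
  have "inner u w = (\<Sum>i=1..n. s i * inner u (cis (rot_angle n i)))"
    by (simp add: w_eq inner_sum_right)
  also have "\<dots> \<le> (\<Sum>i=1..n. vertex_weight n i * inner u (cis (rot_angle n i)))"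
    by (rule sum_mult_le_sum_sign_mult[OF s sign sum_vertex_weight])
  also have "\<dots> = inner u (rot_vertex n)"
    by (simp add: rot_vertex_def inner_sum_right)
  finally show ?thesis .
qed

lemma vertex_weight_mult_sin_even:
  assumes n: "n = 2 * m" "m \<ge> 1" and i: "i \<in> {1..n}"
  shows "vertex_weight n i * sin (rot_angle n i) = \<bar>sin (rot_angle n i)\<bar>"
proof (cases "i \<le> m")
  case True
  have "sin (rot_angle n i) \<ge> 0"
    using n i True by (intro sin_ge_zero) (auto simp: field_simps)
  then show ?thesis
    using n True by (simp add: vertex_weight_def)
next
  case False
  have "sin (rot_angle n i - pi) \<ge> 0"
    using n i False by (intro sin_ge_zero) (auto simp: field_simps)
  then have "sin (rot_angle n i) \<le> 0"
    by (simp add: sin_diff)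
  then show ?thesis
    using n i False by (simp add: vertex_weight_def)
qed

lemma vertex_weight_mult_sin_odd:
  assumes n: "n = 2 * M + 1" "M \<ge> 1" and i: "i \<in> {1..n}" and y: "y = pi / (2 * real n)"
  shows "vertex_weight n i * (sin ((4 * real i + 1) * y) - sin y) = \<bar>sin ((4 * real i + 1) * y) - sin y\<bar>"
proof -
  have y0: "y > 0" and ny: "2 * real n * y = pi"
    using n y by auto
  have "1 * y < (2 * real n) * y"
    using n y0 by (intro mult_strict_right_mono) auto
  then have y_pi: "y < pi"
    using ny by simp
  consider "i \<le> M" | "M < i" "i \<le> 2 * M" | "i = n"
    using n i by fastforce
  then show ?thesis
  proof cases
    case 1
    have "(4 * real i + 1) * y \<le> (2 * real n - 1) * y"
      using 1 n y0 by (intro mult_right_mono) auto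
    then have "sin y \<le> sin ((4 * real i + 1) * y)"
      using y0 ny by (intro sin_le_sin_of_le_pi_minus) (auto simp: algebra_simps)
    then show ?thesis
      using 1 n by (simp add: vertex_weight_def)
  next
    case 2
    have "(2 * real n) * y \<le> (4 * real i + 1) * y" "(4 * real i + 1) * y < (4 * real n) * y"
      using 2 n y0 by (intro mult_right_mono mult_strict_right_mono; simp)+
    then have "sin ((4 * real i + 1) * y) \<le> 0"
      using ny by (intro sin_le_zero) (auto simp: algebra_simps)
    moreover have "sin y > 0"
      using y0 y_pi by (intro sin_gt_zero)
    ultimately show ?thesis
      using 2 n by (simp add: vertex_weight_def)
  next
    case 3
    have "(4 * real i + 1) * y = y + 2 * pi"
      using 3 ny by (simp add: algebra_simps)
    then show ?thesis
      using 3 n by (simp add: vertex_weight_def)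
  qed
qed

definition rot_inradius :: "nat \<Rightarrow> real" where
  "rot_inradius n =
     (if odd n then cot (pi / (2 * real n)) * cos (pi / (2 * real n)) else 2 * cot (pi / real n))"

lemma rot_zonotope_support_bound:
  assumes "n \<ge> 2"
  shows "\<exists>u. cmod u = 1 \<and> (\<forall>w\<in>rot_zonotope n. inner u w \<le> rot_inradius n)"
proof (cases "odd n")
  case False
  then obtain m where n: "n = 2 * m" by (auto elim: evenE)
  with assms have m: "m \<ge> 1" by simp
  have "inner \<i> w \<le> rot_inradius n" if "w \<in> rot_zonotope n" for w
  proof -
    have "inner \<i> w \<le> inner \<i> (rot_vertex n)"
      using vertex_weight_mult_sin_even[OF n m] that
      by (intro inner_le_inner_rot_vertex[where t = 0]) (simp_all add: inner_complex_def)
    then show ?thesis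
      using False by (simp add: rot_vertex_even[OF n m] rot_inradius_def inner_complex_def)
  qed
  then show ?thesis
    by (intro exI[of _ \<i>]) simp
next
  case True
  then obtain M where n: "n = 2 * M + 1" by (auto elim: oddE)
  with assms have M: "M \<ge> 1" by simp
  define y where "y = pi / (2 * real n)"
  define u where "u = Complex (sin y) (cos y)"
  have inner_u: "inner u (cis (rot_angle n i)) = sin ((4 * real i + 1) * y)" for i
  proof -
    have "(4 * real i + 1) * y = rot_angle n i + y"
      using assms by (simp add: y_def field_simps)
    then show ?thesis
      by (simp add: u_def inner_complex_def sin_add algebra_simps)
  qed
  have "inner u w \<le> rot_inradius n" if "w \<in> rot_zonotope n" for w
  proof -
    have "inner u w \<le> inner u (rot_vertex n)"
      using vertex_weight_mult_sin_odd[OF n M _ y_def] that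
      by (intro inner_le_inner_rot_vertex[where t = "sin y"]) (simp_all add: inner_u)
    then show ?thesis
      using True by (simp add: rot_vertex_odd[OF n M] rot_inradius_def u_def y_def inner_complex_def mult.commute)
  qed
  moreover have "cmod u = 1"
    by (simp add: u_def cmod_def)
  ultimately show ?thesis
    by blast
qed

lemma rot_inradius_scaleR_in_rot_zonotope:
  assumes n: "n \<ge> 2" and u: "cmod u = 1"
  shows "rot_inradius n *\<^sub>R u \<in> rot_zonotope n"
proof (cases "odd n")
  case False
  then obtain m where n2: "n = 2 * m" by (auto elim: evenE)
  with n have m: "m \<ge> 1" by simp
  have s: "sin (pi / real n) > 0"
    using n by (rule sin_pi_div_gt_zero)
  have "(2 / sin (pi / real n) * cos ((2 * pi / real n) / 2)) *\<^sub>R u \<in> rot_zonotope n"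
  proof (rule rotation_invariant_convex_contains_circle[OF convex_rot_zonotope])
    show "cis (2 * pi / real n) * x \<in> rot_zonotope n" if "x \<in> rot_zonotope n" for x
      using n that by (rule cis_rot_zonotope)
    have "rot_vertex n = rcis (2 / sin (pi / real n)) (pi/2 + pi / real n)"
      using s by (simp add: rot_vertex_even[OF n2 m] complex_eq_iff cos_add sin_add cot_def)
    then show "rcis (2 / sin (pi / real n)) (pi/2 + pi / real n) \<in> rot_zonotope n"
      using rot_vertex_in_rot_zonotope by metis
    show "real n * (2 * pi / real n) = 2 * pi" "2 * pi / real n \<le> pi"
      using n by (simp_all add: field_simps)
  qed (use s n u in auto)
  then show ?thesis
    using False by (simp add: rot_inradius_def cot_def)
next
  case True
  then obtain M where n2: "n = 2 * M + 1" by (auto elim: oddE)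
  with n have M: "M \<ge> 1" by simp
  have "(cot (pi / (2 * real n)) * cos ((pi / real n) / 2)) *\<^sub>R u \<in> rot_zonotope n"
  proof (rule rotation_invariant_convex_contains_circle[OF convex_rot_zonotope])
    show "cis (pi / real n) * x \<in> rot_zonotope n" if "x \<in> rot_zonotope n" for x
      using n2 M that by (rule cis_half_rot_zonotope_odd)
    have "rot_vertex n = rcis (cot (pi / (2 * real n))) (pi/2)"
      by (simp add: rot_vertex_odd[OF n2 M] complex_eq_iff)
    then show "rcis (cot (pi / (2 * real n))) (pi/2) \<in> rot_zonotope n"
      using rot_vertex_in_rot_zonotope by metis
    show "cot (pi / (2 * real n)) \<ge> 0"
      using n by (intro less_imp_le[OF cot_gt_zero]) (auto simp: field_simps)
    show "real (2 * n) * (pi / real n) = 2 * pi" "pi / real n \<le> pi"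
      using n by (simp_all add: field_simps)
  qed (use n u in auto)
  moreover have "(pi / real n) / 2 = pi / (2 * real n)"
    by simp
  ultimately show ?thesis
    using True by (simp only: rot_inradius_def not_False_eq_True if_True)
qed

theorem mainTheorem9:
  fixes n :: nat
  assumes "n \<ge> 2"
  shows "Rp {1..n} (Pi_rot n) =
    (if odd n then (1 / real n) * cot (pi / (2 * real n)) * cos (pi / (2 * real n))
     else (2 / real n) * cot (pi / real n))"
proof -
  have n: "real n > 0"
    using assms by simp
  have "simulates {1..n} (Pi_rot n) unit_xz UNIV (Pp (rot_inradius n / real n))"
    unfolding simulates_Pi_rot_iff[OF assms]
    using n rot_inradius_scaleR_in_rot_zonotope[OF assms] by simp
  moreover have "r \<le> rot_inradius n / real n"
    if "simulates {1..n} (Pi_rot n) unit_xz UNIV (Pp r)" for r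
  proof -
    obtain u where u: "cmod u = 1" and bound: "\<forall>w\<in>rot_zonotope n. inner u w \<le> rot_inradius n"
      using rot_zonotope_support_bound[OF assms] by blast
    have "(real n * r) *\<^sub>R u \<in> rot_zonotope n"
      using that u unfolding simulates_Pi_rot_iff[OF assms] by blast
    then have "inner u ((real n * r) *\<^sub>R u) \<le> rot_inradius n"
      using bound by blast
    then have "real n * r \<le> rot_inradius n"
      using u by (simp add: power2_norm_eq_inner[symmetric])
    then show ?thesis
      using n by (simp add: field_simps)
  qed
  ultimately have "Rp {1..n} (Pi_rot n) = rot_inradius n / real n"
    unfolding Rp_def by (intro cSup_eq_maximum) auto
  then show ?thesis
    by (simp add: rot_inradius_def)
qed

end
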